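(* For every $m\ge2$, let $C=C_{2m}(1,1)=J_{2m}+E_{m-1,m+1}-E_{m,m+2}\in M_{2m}$. Then for all $\theta\in\mathbb{R}$ and $u\in\mathbb{C}$, $$\det\bigl(uI-H_C(\theta)\bigr)=2^{-2m}\bigl(U_m(u)-U_{m-1}(u)-U_{m-2}(u)\bigr)\bigl(U_m(u)+U_{m-1}(u)-U_{m-2}(u)\bigr).$$ In particular $C_{2m}(1,1)$ has the Circularity property.
   Context: $J_n$ is the $n\times n$ nilpotent Jordan block (ones on the first superdiagonal, zeros elsewhere); $E_{a,b}$ is the matrix unit with $1$ in position $(a,b)$ and zeros elsewhere. $H_X(\theta)=\frac12(e^{-i\theta}X+e^{i\theta}X^* )$; $X$ has the Circularity property if the spectrum of $H_X(\theta)$ is independent of $\theta$. $U_k$ are Chebyshev polynomials of the second kind: $U_{-1}=0$, $U_0=1$, $U_{k+1}(u)=2uU_k(u)-U_{k-1}(u)$. *)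

theory Defs
  imports Complex_Main "Jordan_Normal_Form.Determinant" "Jordan_Normal_Form.Char_Poly"
begin

(* 0-based indexing: entry (i,j) of an n x n matrix has 0 <= i,j < n. *)

definition conj_tr :: "complex mat \<Rightarrow> complex mat" where
  "conj_tr X = mat (dim_col X) (dim_row X) (\<lambda>(i,j). cnj (X $$ (j,i)))"

definition H_mat :: "complex mat \<Rightarrow> real \<Rightarrow> complex mat" where
  "H_mat X \<theta> = (1/2 :: complex) \<cdot>\<^sub>m
      (exp (- \<i> * of_real \<theta>) \<cdot>\<^sub>m X + exp (\<i> * of_real \<theta>) \<cdot>\<^sub>m conj_tr X)"

definition mat_spectrum :: "complex mat \<Rightarrow> complex set" where
  "mat_spectrum A = {k. eigenvalue A k}"

definition circularity :: "complex mat \<Rightarrow> bool" where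
  "circularity X \<longleftrightarrow> (\<forall>\<theta>1 \<theta>2. mat_spectrum (H_mat X \<theta>1) = mat_spectrum (H_mat X \<theta>2))"

(* Chebyshev polynomials of the second kind: U_0 = 1, U_1 = 2u (= 2u U_0 - U_{-1} with U_{-1}=0) *)
fun chebU :: "nat \<Rightarrow> complex \<Rightarrow> complex" where
  "chebU 0 u = 1"
| "chebU (Suc 0) u = 2 * u"
| "chebU (Suc (Suc k)) u = 2 * u * chebU (Suc k) u - chebU k u"

definition jordan_nil :: "nat \<Rightarrow> complex mat" where
  "jordan_nil n = mat n n (\<lambda>(i,j). if j = i + 1 then 1 else 0)"

(* matrix unit E_{a,b} of size n, 1-based indices a,b as in the paper *)
definition mat_unit :: "nat \<Rightarrow> nat \<Rightarrow> nat \<Rightarrow> complex mat" where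
  "mat_unit n a b = mat n n (\<lambda>(i,j). if i + 1 = a \<and> j + 1 = b then 1 else 0)"

definition C_mat :: "nat \<Rightarrow> complex mat" where
  "C_mat m = jordan_nil (2*m) + mat_unit (2*m) (m-1) (m+1) - mat_unit (2*m) m (m+2)"

end

theory Submission
  imports Defs
begin

text \<open>
  Write \<open>m = p + 2\<close>. Outside the central window of rows and columns \<open>p, ..., p + 3\<close>
  (0-based), \<open>u I - H\<^sub>C(\<theta>)\<close> is tridiagonal with diagonal \<open>u\<close> and off-diagonal entries
  \<open>-e\<^sup>\<plusminus>\<^sup>i\<^sup>\<theta>/2\<close>, whose products are \<open>1/4\<close>. Peeling these tridiagonal parts off
  from the top and from the bottom by the continuant recurrence leaves the window's \<open>4 \<times> 4\<close>
  determinant and its \<open>3 \<times> 3\<close> and \<open>2 \<times> 2\<close> principal minors, weighted by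
  \<open>U\<^sub>p(u)/2\<^sup>p\<close> and \<open>U\<^sub>p\<^sub>-\<^sub>1(u)/2\<^sup>p\<^sup>-\<^sup>1\<close>. Only \<open>\<theta>\<close>-free combinations of the window
  minors occur, and the Chebyshev recurrence turns the result into the stated factorization.
  A characteristic polynomial independent of \<open>\<theta>\<close> gives a spectrum independent of \<open>\<theta>\<close>.
\<close>

definition principal_block :: "'a mat \<Rightarrow> nat \<Rightarrow> nat \<Rightarrow> 'a mat" where
  "principal_block A k n = mat n n (\<lambda>(i,j). A $$ (k + i, k + j))"

lemma principal_block_carrier [simp]: "principal_block A k n \<in> carrier_mat n n"
  by (simp add: principal_block_def)

lemma laplace_expansion_row_diagonal:
  fixes A :: "'a :: comm_ring_1 mat"
  assumes A: "A \<in> carrier_mat n n" and i: "i < n"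
    and zero: "\<And>j. j < n \<Longrightarrow> j \<noteq> i \<Longrightarrow> A $$ (i,j) = 0"
  shows "det A = A $$ (i,i) * det (mat_delete A i i)"
proof -
  have "det A = (\<Sum>j<n. A $$ (i,j) * cofactor A i j)"
    by (rule laplace_expansion_row[OF A i])
  also have "\<dots> = (\<Sum>j\<in>{i}. A $$ (i,j) * cofactor A i j)"
    by (rule sum.mono_neutral_right) (use i zero in auto)
  finally show ?thesis by (simp add: cofactor_def)
qed

lemma det_principal_block_expand_first:
  fixes A :: "'a :: comm_ring_1 mat"
  assumes zero: "\<And>j. k + 2 \<le> j \<Longrightarrow> j < k + n + 2 \<Longrightarrow> A $$ (k,j) = 0 \<and> A $$ (j,k) = 0"
  shows "det (principal_block A k (n + 2)) = A $$ (k,k) * det (principal_block A (k + 1) (n + 1))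
      - A $$ (k,k + 1) * A $$ (k + 1,k) * det (principal_block A (k + 2) n)"
proof -
  let ?B = "principal_block A k (n + 2)"
  have B: "?B \<in> carrier_mat (n + 2) (n + 2)" by simp
  have "det ?B = (\<Sum>i<n + 2. ?B $$ (i,0) * cofactor ?B i 0)"
    by (rule laplace_expansion_column[OF B]) simp
  also have "\<dots> = (\<Sum>i\<in>{0,1}. ?B $$ (i,0) * cofactor ?B i 0)"
    by (rule sum.mono_neutral_right) (use zero in \<open>auto simp: principal_block_def\<close>)
  also have "\<dots> = A $$ (k,k) * det (mat_delete ?B 0 0) - A $$ (k + 1,k) * det (mat_delete ?B 1 0)"
    by (simp add: cofactor_def principal_block_def)
  also have "mat_delete ?B 0 0 = principal_block A (k + 1) (n + 1)"
    by (rule eq_matI) (auto simp: mat_delete_def principal_block_def)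
  also have "det (mat_delete ?B 1 0) = A $$ (k,k + 1) * det (principal_block A (k + 2) n)"
  proof -
    let ?D = "mat_delete ?B 1 0"
    have "det ?D = ?D $$ (0,0) * det (mat_delete ?D 0 0)"
      by (rule laplace_expansion_row_diagonal[of _ "n + 1"])
        (use zero in \<open>auto simp: mat_delete_def principal_block_def\<close>)
    also have "mat_delete ?D 0 0 = principal_block A (k + 2) n"
      by (rule eq_matI) (auto simp: mat_delete_def principal_block_def)
    finally show ?thesis by (simp add: mat_delete_def principal_block_def)
  qed
  finally show ?thesis by (simp add: algebra_simps)
qed

lemma det_principal_block_expand_last:
  fixes A :: "'a :: comm_ring_1 mat"
  assumes zero: "\<And>j. k \<le> j \<Longrightarrow> j < k + n \<Longrightarrow> A $$ (k + n + 1,j) = 0 \<and> A $$ (j,k + n + 1) = 0"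
  shows "det (principal_block A k (n + 2)) = A $$ (k + n + 1,k + n + 1) * det (principal_block A k (n + 1))
      - A $$ (k + n,k + n + 1) * A $$ (k + n + 1,k + n) * det (principal_block A k n)"
proof -
  let ?B = "principal_block A k (n + 2)"
  have B: "?B \<in> carrier_mat (n + 2) (n + 2)" by simp
  have "det ?B = (\<Sum>i<n + 2. ?B $$ (i,n + 1) * cofactor ?B i (n + 1))"
    by (rule laplace_expansion_column[OF B]) simp
  also have "\<dots> = (\<Sum>i\<in>{n,n + 1}. ?B $$ (i,n + 1) * cofactor ?B i (n + 1))"
    by (rule sum.mono_neutral_right) (use zero in \<open>auto simp: principal_block_def\<close>)
  also have "\<dots> = A $$ (k + n + 1,k + n + 1) * det (mat_delete ?B (n + 1) (n + 1))
      - A $$ (k + n,k + n + 1) * det (mat_delete ?B n (n + 1))"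
    by (simp add: cofactor_def principal_block_def)
  also have "mat_delete ?B (n + 1) (n + 1) = principal_block A k (n + 1)"
    by (rule eq_matI) (auto simp: mat_delete_def principal_block_def)
  also have "det (mat_delete ?B n (n + 1)) = A $$ (k + n + 1,k + n) * det (principal_block A k n)"
  proof -
    let ?D = "mat_delete ?B n (n + 1)"
    have "det ?D = ?D $$ (n,n) * det (mat_delete ?D n n)"
      by (rule laplace_expansion_row_diagonal[of _ "n + 1"])
        (use zero in \<open>auto simp: mat_delete_def principal_block_def\<close>)
    also have "mat_delete ?D n n = principal_block A k n"
      by (rule eq_matI) (auto simp: mat_delete_def principal_block_def)
    finally show ?thesis by (simp add: mat_delete_def principal_block_def)
  qed
  finally show ?thesis by (simp add: algebra_simps)
qed

text \<open>\<open>scaled_chebU u n = U\<^sub>n\<^sub>-\<^sub>1(u) / 2\<^sup>n\<^sup>-\<^sup>1\<close>, so that index \<open>0\<close> holds \<open>U\<^sub>-\<^sub>1 = 0\<close>; it is the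
  determinant of an \<open>n \<times> n\<close> tridiagonal matrix with diagonal \<open>u\<close> and off-diagonal products \<open>1/4\<close>.\<close>

fun scaled_chebU :: "complex \<Rightarrow> nat \<Rightarrow> complex" where
  "scaled_chebU u 0 = 0"
| "scaled_chebU u (Suc n) = chebU n u / 2 ^ n"

lemma scaled_chebU_Suc_Suc: "scaled_chebU u (Suc (Suc n)) = u * scaled_chebU u (Suc n) - scaled_chebU u n / 4"
  by (cases n) (simp_all add: field_simps)

lemma det_principal_block_peel_first:
  fixes A :: "complex mat"
  assumes "t < l"
    and diag: "\<And>i. k \<le> i \<Longrightarrow> i < k + t \<Longrightarrow> A $$ (i,i) = u \<and> A $$ (i,i + 1) * A $$ (i + 1,i) = 1/4"
    and zero: "\<And>i j. k \<le> i \<Longrightarrow> i < k + t \<Longrightarrow> i + 2 \<le> j \<Longrightarrow> j < k + l \<Longrightarrow>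
                  A $$ (i,j) = 0 \<and> A $$ (j,i) = 0"
  shows "det (principal_block A k l) = scaled_chebU u (t + 1) * det (principal_block A (k + t) (l - t))
           - scaled_chebU u t / 4 * det (principal_block A (k + t + 1) (l - t - 1))"
proof -
  have "s \<le> t \<Longrightarrow> det (principal_block A k l) = scaled_chebU u (s + 1) * det (principal_block A (k + s) (l - s))
           - scaled_chebU u s / 4 * det (principal_block A (k + s + 1) (l - s - 1))" for s
  proof (induction s)
    case (Suc s)
    define n where "n = l - s - 2"
    have n: "l - s = n + 2" using Suc.prems \<open>t < l\<close> unfolding n_def by simp
    have rec: "det (principal_block A (k + s) (l - s)) =
        u * det (principal_block A (k + s + 1) (l - s - 1)) - det (principal_block A (k + s + 2) (l - s - 2)) / 4"
    proof -
      have "k + s < k + t" using Suc.prems by simp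
      then have du: "A $$ (k + s,k + s) = u" and dc: "A $$ (k + s,k + s + 1) * A $$ (k + s + 1,k + s) = 1/4"
        using diag by auto
      have expand: "det (principal_block A (k + s) (n + 2))
          = A $$ (k + s,k + s) * det (principal_block A (k + s + 1) (n + 1))
          - A $$ (k + s,k + s + 1) * A $$ (k + s + 1,k + s) * det (principal_block A (k + s + 2) n)"
        by (rule det_principal_block_expand_first) (use zero \<open>k + s < k + t\<close> n in auto)
      have "l - s - 1 = n + 1" "l - s - 2 = n" using n by auto
      with expand show ?thesis unfolding n du dc by simp
    qed
    have IH: "det (principal_block A k l) = scaled_chebU u (s + 1) * det (principal_block A (k + s) (l - s))
           - scaled_chebU u s / 4 * det (principal_block A (k + s + 1) (l - s - 1))"
      using Suc by simp
    show ?case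
      unfolding IH rec by (simp add: scaled_chebU_Suc_Suc algebra_simps del: scaled_chebU.simps)
  qed simp
  then show ?thesis by simp
qed

lemma det_principal_block_peel_last:
  fixes A :: "complex mat"
  assumes "t < l"
    and diag: "\<And>i. k + l \<le> i + t + 1 \<Longrightarrow> i + 1 < k + l \<Longrightarrow>
                  A $$ (i + 1,i + 1) = u \<and> A $$ (i,i + 1) * A $$ (i + 1,i) = 1/4"
    and zero: "\<And>i j. k + l \<le> i + t + 1 \<Longrightarrow> i + 1 < k + l \<Longrightarrow> k \<le> j \<Longrightarrow> j < i \<Longrightarrow>
                  A $$ (i + 1,j) = 0 \<and> A $$ (j,i + 1) = 0"
  shows "det (principal_block A k l) = scaled_chebU u (t + 1) * det (principal_block A k (l - t))
           - scaled_chebU u t / 4 * det (principal_block A k (l - t - 1))"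
proof -
  have "s \<le> t \<Longrightarrow> det (principal_block A k l) = scaled_chebU u (s + 1) * det (principal_block A k (l - s))
           - scaled_chebU u s / 4 * det (principal_block A k (l - s - 1))" for s
  proof (induction s)
    case (Suc s)
    define n where "n = l - s - 2"
    have n: "l - s = n + 2" using Suc.prems \<open>t < l\<close> unfolding n_def by simp
    have rec: "det (principal_block A k (l - s)) =
        u * det (principal_block A k (l - s - 1)) - det (principal_block A k (l - s - 2)) / 4"
    proof -
      have i: "k + l \<le> k + n + t + 1" "k + n + 1 < k + l" using Suc.prems n by auto
      then have du: "A $$ (k + n + 1,k + n + 1) = u" and dc: "A $$ (k + n,k + n + 1) * A $$ (k + n + 1,k + n) = 1/4"
        using diag by auto
      have expand: "det (principal_block A k (n + 2))
          = A $$ (k + n + 1,k + n + 1) * det (principal_block A k (n + 1))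
          - A $$ (k + n,k + n + 1) * A $$ (k + n + 1,k + n) * det (principal_block A k n)"
        by (rule det_principal_block_expand_last) (use zero i in auto)
      have "l - s - 1 = n + 1" "l - s - 2 = n" using n by auto
      with expand show ?thesis unfolding n du dc by simp
    qed
    have IH: "det (principal_block A k l) = scaled_chebU u (s + 1) * det (principal_block A k (l - s))
           - scaled_chebU u s / 4 * det (principal_block A k (l - s - 1))"
      using Suc by simp
    show ?case
      unfolding IH rec by (simp add: scaled_chebU_Suc_Suc algebra_simps del: scaled_chebU.simps)
  qed simp
  then show ?thesis by simp
qed

lemma det_mat2: "det (mat 2 2 g) = (g (0,0) * g (1,1) - g (0,1) * g (1,0) :: 'a :: comm_ring_1)"
proof -
  have A: "(mat 2 2 g :: 'a mat) \<in> carrier_mat 2 2" by simp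
  show ?thesis
    by (subst laplace_expansion_row[OF A, of 0])
      (simp_all add: numeral_2_eq_2 cofactor_def mat_delete_def det_single lessThan_Suc)
qed

lemma mat_delete_mat_first_row:
  "mat_delete (mat (Suc n) (Suc n) g) 0 j = mat n n (\<lambda>(i',j'). g (Suc i', if j' < j then j' else Suc j'))"
  by (rule eq_matI) (auto simp: mat_delete_def)

lemma det_mat3: "det (mat 3 3 g) = (g (0,0) * (g (1,1) * g (2,2) - g (1,2) * g (2,1))
   - g (0,1) * (g (1,0) * g (2,2) - g (1,2) * g (2,0))
   + g (0,2) * (g (1,0) * g (2,1) - g (1,1) * g (2,0)) :: 'a :: comm_ring_1)"
proof -
  have A: "(mat 3 3 g :: 'a mat) \<in> carrier_mat 3 3" by simp
  have "{..<3::nat} = {0,1,2}" by auto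
  then have "det (mat 3 3 g) = (\<Sum>j\<in>{0,1,2}. g (0,j) * cofactor (mat 3 3 g) 0 j)"
    by (subst laplace_expansion_row[OF A, of 0]) simp_all
  then show ?thesis
    by (simp add: cofactor_def mat_delete_mat_first_row[of 2, simplified] det_mat2)
      (simp add: numeral_2_eq_2 algebra_simps)
qed

lemma det_mat4: "det (mat 4 4 g) = (
     g (0,0) * det (mat 3 3 (\<lambda>(i,j). g (Suc i, Suc j)))
   - g (0,1) * det (mat 3 3 (\<lambda>(i,j). g (Suc i, if j = 0 then 0 else Suc j)))
   + g (0,2) * det (mat 3 3 (\<lambda>(i,j). g (Suc i, if j < 2 then j else Suc j)))
   - g (0,3) * det (mat 3 3 (\<lambda>(i,j). g (Suc i, j))) :: 'a :: comm_ring_1)"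
proof -
  have A: "(mat 4 4 g :: 'a mat) \<in> carrier_mat 4 4" by simp
  have "{..<4::nat} = {0,1,2,3}" by auto
  then have "det (mat 4 4 g) = (\<Sum>j\<in>{0,1,2,3}. g (0,j) * cofactor (mat 4 4 g) 0 j)"
    by (subst laplace_expansion_row[OF A, of 0]) simp_all
  moreover have "mat 3 3 (\<lambda>(i,j). g (Suc i, if j < 3 then j else Suc j)) = mat 3 3 (\<lambda>(i,j). g (Suc i, j))"
    by (rule eq_matI) auto
  moreover have "mat 3 3 (\<lambda>(i,j). g (Suc i, if j = 0 then j else Suc j))
      = mat 3 3 (\<lambda>(i,j). g (Suc i, if j = 0 then 0 else Suc j))"
    by (rule eq_matI) auto
  ultimately show ?thesis
    by (simp add: cofactor_def mat_delete_mat_first_row[of 3, simplified] del: One_nat_def)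
qed

definition C_entry :: "nat \<Rightarrow> nat \<Rightarrow> nat \<Rightarrow> complex" where
  "C_entry p i j = of_bool (j = i + 1) + of_bool (i = p \<and> j = p + 2) - of_bool (i = p + 1 \<and> j = p + 3)"

lemma C_mat_entry:
  "i < 2 * Suc (Suc p) \<Longrightarrow> j < 2 * Suc (Suc p) \<Longrightarrow> C_mat (Suc (Suc p)) $$ (i,j) = C_entry p i j"
  by (auto simp: C_mat_def jordan_nil_def mat_unit_def C_entry_def)

lemma C_mat_carrier: "C_mat m \<in> carrier_mat (2 * m) (2 * m)"
  by (rule carrier_matI) (simp_all add: C_mat_def jordan_nil_def mat_unit_def)

lemma H_mat_index:
  assumes "X \<in> carrier_mat n n" "i < n" "j < n"
  shows "H_mat X \<theta> $$ (i,j) = (X $$ (i,j) / exp (\<i> * of_real \<theta>) + exp (\<i> * of_real \<theta>) * cnj (X $$ (j,i))) / 2"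
  using assms by (simp add: H_mat_def conj_tr_def exp_minus field_simps)

lemma H_mat_carrier: "X \<in> carrier_mat n n \<Longrightarrow> H_mat X \<theta> \<in> carrier_mat n n"
  by (auto simp: H_mat_def conj_tr_def)

lemma uI_minus_H_C_entry:
  assumes "i < 2 * Suc (Suc p)" "j < 2 * Suc (Suc p)"
  shows "(u \<cdot>\<^sub>m 1\<^sub>m (2 * Suc (Suc p)) - H_mat (C_mat (Suc (Suc p))) \<theta>) $$ (i,j)
     = (if i = j then u else 0)
       - (C_entry p i j / exp (\<i> * of_real \<theta>) + exp (\<i> * of_real \<theta>) * C_entry p j i) / 2"
proof -
  let ?C = "C_mat (Suc (Suc p))"
  have C: "?C \<in> carrier_mat (2 * Suc (Suc p)) (2 * Suc (Suc p))" by (rule C_mat_carrier)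
  have "cnj (C_entry p j i) = C_entry p j i" by (simp add: C_entry_def)
  then show ?thesis
    using assms by (simp add: H_mat_index[OF C] carrier_matD[OF H_mat_carrier[OF C]] C_mat_entry del: mult_Suc_right)
qed

lemma C_entry_shift: "C_entry p (p + i) (p + j) = C_entry 0 i j"
  by (simp add: C_entry_def)

lemma det_central_blocks_uI_minus_H_C:
  fixes p :: nat and \<theta> :: real and u :: complex
  defines "M \<equiv> u \<cdot>\<^sub>m 1\<^sub>m (2 * Suc (Suc p)) - H_mat (C_mat (Suc (Suc p))) \<theta>"
  shows "det (principal_block M p 4) = u^4 - 5/4 * u^2 + 1/4"
    and "det (principal_block M p 3) + det (principal_block M (p + 1) 3) = 2 * u^3 - 3/2 * u"
    and "det (principal_block M (p + 1) 2) = u^2 - 1/4"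
proof -
  define \<omega> where "\<omega> = exp (\<i> * of_real \<theta>)"
  have "\<omega> \<noteq> 0" by (simp add: \<omega>_def)
  define W where "W i j = (if i = j then u else 0) - (C_entry 0 i j / \<omega> + \<omega> * C_entry 0 j i) / 2" for i j
  txt \<open>The two \<open>3 \<times> 3\<close> minors separately depend on
    \<open>\<theta>\<close> through \<open>\<omega> + 1/\<omega>\<close>; only their sum is \<open>\<theta>\<close>-free.\<close>
  have block: "principal_block M (p + k) n = mat n n (\<lambda>(i,j). W (k + i) (k + j))" if "k + n \<le> 4" for k n
  proof (rule eq_matI)
    fix i j assume "i < dim_row (mat n n (\<lambda>(i,j). W (k + i) (k + j)))" "j < dim_col (mat n n (\<lambda>(i,j). W (k + i) (k + j)))"
    then show "principal_block M (p + k) n $$ (i,j) = mat n n (\<lambda>(i,j). W (k + i) (k + j)) $$ (i,j)"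
      using that uI_minus_H_C_entry[of "p + (k + i)" p "p + (k + j)" u \<theta>]
      by (simp add: principal_block_def M_def W_def \<omega>_def C_entry_shift add.assoc)
  qed (simp_all add: principal_block_def)
  show "det (principal_block M p 4) = u^4 - 5/4 * u^2 + 1/4"
    using block[of 0 4] \<open>\<omega> \<noteq> 0\<close>
    by (simp add: det_mat4 det_mat3 W_def C_entry_def) (simp add: field_simps eval_nat_numeral)
  show "det (principal_block M p 3) + det (principal_block M (p + 1) 3) = 2 * u^3 - 3/2 * u"
    using block[of 0 3] block[of 1 3] \<open>\<omega> \<noteq> 0\<close>
    by (simp add: det_mat3 W_def C_entry_def) (simp add: field_simps eval_nat_numeral)
  show "det (principal_block M (p + 1) 2) = u^2 - 1/4"
    using block[of 1 2] \<open>\<omega> \<noteq> 0\<close>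
    by (simp add: det_mat2 W_def C_entry_def) (simp add: field_simps eval_nat_numeral)
qed

lemma det_uI_minus_H_C_reduce_to_central_blocks:
  fixes p :: nat and \<theta> :: real and u :: complex
  defines "M \<equiv> u \<cdot>\<^sub>m 1\<^sub>m (2 * Suc (Suc p)) - H_mat (C_mat (Suc (Suc p))) \<theta>"
    and "X \<equiv> scaled_chebU u (p + 1)" and "Y \<equiv> scaled_chebU u p"
  shows "det M = X^2 * det (principal_block M p 4)
    - X * Y / 4 * (det (principal_block M p 3) + det (principal_block M (p + 1) 3))
    + (Y / 4)^2 * det (principal_block M (p + 1) 2)"
proof -
  note entry = uI_minus_H_C_entry[of _ p _ u \<theta>, folded M_def]
  have exp_cancel: "exp (\<i> * of_real \<theta>) * (1 / exp (\<i> * of_real \<theta>)) = 1" by simp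
  have "M = principal_block M 0 (2 * Suc (Suc p))"
    by (rule eq_matI) (simp_all add: principal_block_def M_def carrier_matD[OF H_mat_carrier[OF C_mat_carrier]])
  also have "det \<dots> = X * det (principal_block M p (p + 4)) - Y / 4 * det (principal_block M (p + 1) (p + 3))"
    using det_principal_block_peel_first[of p "2 * Suc (Suc p)" 0 M u]
    by (simp add: entry C_entry_def exp_cancel X_def Y_def) (simp add: add.commute)
  also have "det (principal_block M p (p + 4))
      = X * det (principal_block M p 4) - Y / 4 * det (principal_block M p 3)"
    using det_principal_block_peel_last[of p "p + 4" p M u]
    by (simp add: entry C_entry_def exp_cancel X_def Y_def)
  also have "det (principal_block M (p + 1) (p + 3))
      = X * det (principal_block M (p + 1) 3) - Y / 4 * det (principal_block M (p + 1) 2)"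
    using det_principal_block_peel_last[of p "p + 3" "p + 1" M u]
    by (simp add: entry C_entry_def exp_cancel X_def Y_def)
  finally show ?thesis by (simp add: algebra_simps power2_eq_square)
qed

lemma chebU_factorization_scaled:
  fixes p :: nat and u :: complex
  defines "X \<equiv> scaled_chebU u (p + 1)" and "Y \<equiv> scaled_chebU u p"
  shows "1 / 2 ^ (2 * Suc (Suc p)) * (chebU (Suc (Suc p)) u - chebU (Suc p) u - chebU p u)
           * (chebU (Suc (Suc p)) u + chebU (Suc p) u - chebU p u)
    = X^2 * (u^4 - 5/4 * u^2 + 1/4) - X * Y / 4 * (2 * u^3 - 3/2 * u) + (Y / 4)^2 * (u^2 - 1/4)"
proof -
  define q :: complex where "q = 2 ^ p"
  have "q \<noteq> 0" by (simp add: q_def)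
  have U0: "chebU p u = q * X"
    by (simp add: X_def q_def)
  have U1: "chebU (Suc p) u = 2 * q * (u * X - Y / 4)"
  proof -
    have "chebU (Suc p) u = 2 * q * scaled_chebU u (Suc (Suc p))" by (simp add: q_def)
    then show ?thesis by (simp add: scaled_chebU_Suc_Suc X_def Y_def del: scaled_chebU.simps)
  qed
  have U2: "chebU (Suc (Suc p)) u = 4 * q * (u * (u * X - Y / 4) - X / 4)"
  proof -
    have "chebU (Suc (Suc p)) u = 4 * q * scaled_chebU u (Suc (Suc (Suc p)))" by (simp add: q_def)
    then show ?thesis by (simp add: scaled_chebU_Suc_Suc X_def Y_def del: scaled_chebU.simps)
  qed
  have "(2::complex) ^ (2 * Suc (Suc p)) = 16 * q^2"
    by (simp add: q_def flip: power_mult) (simp add: mult.commute)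
  with \<open>q \<noteq> 0\<close> show ?thesis
    unfolding U0 U1 U2 by (simp add: field_simps eval_nat_numeral)
qed

lemma det_uI_minus_H_C:
  fixes p :: nat and \<theta> :: real and u :: complex
  shows "det (u \<cdot>\<^sub>m 1\<^sub>m (2 * Suc (Suc p)) - H_mat (C_mat (Suc (Suc p))) \<theta>)
    = 1 / 2 ^ (2 * Suc (Suc p)) * (chebU (Suc (Suc p)) u - chebU (Suc p) u - chebU p u)
        * (chebU (Suc (Suc p)) u + chebU (Suc p) u - chebU p u)"
  unfolding chebU_factorization_scaled det_uI_minus_H_C_reduce_to_central_blocks det_central_blocks_uI_minus_H_C
  ..

lemma eigenvalue_iff_det_smult_one_minus:
  fixes A :: "'a :: field mat"
  assumes A: "A \<in> carrier_mat n n"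
  shows "eigenvalue A k \<longleftrightarrow> det (k \<cdot>\<^sub>m 1\<^sub>m n - A) = 0"
proof -
  have "char_matrix A k = (-1) \<cdot>\<^sub>m (k \<cdot>\<^sub>m 1\<^sub>m n - A)"
    using A by (intro eq_matI) (auto simp: char_matrix_def)
  then have "det (char_matrix A k) = (-1) ^ n * det (k \<cdot>\<^sub>m 1\<^sub>m n - A)"
    using A by (simp add: det_smult)
  then show ?thesis using eigenvalue_det[OF A] by simp
qed

lemma circularityI:
  assumes X: "X \<in> carrier_mat n n"
    and "\<And>\<theta>\<^sub>1 \<theta>\<^sub>2 u. det (u \<cdot>\<^sub>m 1\<^sub>m n - H_mat X \<theta>\<^sub>1) = det (u \<cdot>\<^sub>m 1\<^sub>m n - H_mat X \<theta>\<^sub>2)"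
  shows "circularity X"
proof -
  have "mat_spectrum (H_mat X \<theta>\<^sub>1) = mat_spectrum (H_mat X \<theta>\<^sub>2)" for \<theta>\<^sub>1 \<theta>\<^sub>2
    using assms(2)[of _ \<theta>\<^sub>1 \<theta>\<^sub>2]
    by (simp add: mat_spectrum_def eigenvalue_iff_det_smult_one_minus[OF H_mat_carrier[OF X]])
  then show ?thesis unfolding circularity_def by blast
qed

theorem mainTheorem17:
  fixes m :: nat
  assumes "m \<ge> 2"
  shows "(\<forall>(\<theta>::real) (u::complex).
            det (u \<cdot>\<^sub>m 1\<^sub>m (2*m) - H_mat (C_mat m) \<theta>)
              = (1 / 2 ^ (2*m)) * (chebU m u - chebU (m-1) u - chebU (m-2) u)
                  * (chebU m u + chebU (m-1) u - chebU (m-2) u))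
         \<and> circularity (C_mat m)"
proof -
  obtain p where m: "m = Suc (Suc p)" using assms by (metis add_2_eq_Suc le_Suc_ex)
  have char_poly: "det (u \<cdot>\<^sub>m 1\<^sub>m (2*m) - H_mat (C_mat m) \<theta>)
              = (1 / 2 ^ (2*m)) * (chebU m u - chebU (m-1) u - chebU (m-2) u)
                  * (chebU m u + chebU (m-1) u - chebU (m-2) u)" for \<theta> u
    unfolding m using det_uI_minus_H_C by simp
  moreover have "circularity (C_mat m)"
    by (rule circularityI[OF C_mat_carrier]) (simp only: char_poly)
  ultimately show ?thesis by blast
qed

end
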